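(* Consider the continuous-time Markov process on $\mathbb N_0=\{0,1,2,\dots\}$ with rates $q(0,1)=1$, and for $x\ge1$: $q(x,x+1)=\frac{2x-1}{4x}$, $q(x,x-1)=1-\frac{2x-1}{4x}$, all other rates $0$ (so its jump chain has mean drift $-\frac{1}{2x}$ at $x\ge1$). Consider the $2$-leg spider walk with local configurations $L(x)=\{(x,x+1),(x,x+2)\}$, $x\in\mathbb N_0$, i.e. the process on $\{(x,x+1),(x,x+2):x\ge0\}$ in which a leg at $y$ jumps to $y\pm1$ at rate $q(y,y\pm1)$ provided the resulting configuration is again of this form. Then the Markov process is null recurrent whereas the spider walk is positive recurrent.
   Context: A continuous-time Markov process is called null/positive recurrent if its jump chain, with transition probabilities $p(x,y)=q(x,y)/\sum_{z\ne x}q(x,z)$ for $y\ne x$, is null/positive recurrent. *)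

theory Defs
  imports "HOL-Analysis.Analysis"
begin

text \<open>Discrete-time Markov chains given by a transition kernel P (P y z = probability
of jumping from y to z).  hit P x n y = probability that the chain started in y
first hits x at exactly time n.\<close>

fun hit :: "('a \<Rightarrow> 'a \<Rightarrow> real) \<Rightarrow> 'a \<Rightarrow> nat \<Rightarrow> 'a \<Rightarrow> real" where
  "hit P x 0 y = (if y = x then 1 else 0)"
| "hit P x (Suc n) y = (if y = x then 0 else infsum (\<lambda>z. P y z * hit P x n z) UNIV)"

text \<open>ret P x n = probability that the chain started in x first returns to x at time n+1.\<close>
definition ret :: "('a \<Rightarrow> 'a \<Rightarrow> real) \<Rightarrow> 'a \<Rightarrow> nat \<Rightarrow> real" where
  "ret P x n = infsum (\<lambda>z. P x z * hit P x n z) UNIV"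

definition recurrent_state :: "('a \<Rightarrow> 'a \<Rightarrow> real) \<Rightarrow> 'a \<Rightarrow> bool" where
  "recurrent_state P x \<longleftrightarrow> (\<lambda>n. ret P x n) sums 1"

definition positive_recurrent_state :: "('a \<Rightarrow> 'a \<Rightarrow> real) \<Rightarrow> 'a \<Rightarrow> bool" where
  "positive_recurrent_state P x \<longleftrightarrow>
     recurrent_state P x \<and> summable (\<lambda>n. real (Suc n) * ret P x n)"

definition null_recurrent_state :: "('a \<Rightarrow> 'a \<Rightarrow> real) \<Rightarrow> 'a \<Rightarrow> bool" where
  "null_recurrent_state P x \<longleftrightarrow>
     recurrent_state P x \<and> \<not> summable (\<lambda>n. real (Suc n) * ret P x n)"

definition jump_chain :: "('a \<Rightarrow> 'a \<Rightarrow> real) \<Rightarrow> 'a \<Rightarrow> 'a \<Rightarrow> real" where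
  "jump_chain q x y = (if y \<noteq> x then q x y / infsum (\<lambda>z. q x z) {z. z \<noteq> x} else 0)"

text \<open>A CTMC with rates q on state space S is null/positive recurrent iff its jump chain is
(every state of S being null/positive recurrent).\<close>
definition ctmc_null_recurrent :: "('a \<Rightarrow> 'a \<Rightarrow> real) \<Rightarrow> 'a set \<Rightarrow> bool" where
  "ctmc_null_recurrent q S \<longleftrightarrow> (\<forall>x\<in>S. null_recurrent_state (jump_chain q) x)"

definition ctmc_positive_recurrent :: "('a \<Rightarrow> 'a \<Rightarrow> real) \<Rightarrow> 'a set \<Rightarrow> bool" where
  "ctmc_positive_recurrent q S \<longleftrightarrow> (\<forall>x\<in>S. positive_recurrent_state (jump_chain q) x)"

definition qbd :: "nat \<Rightarrow> nat \<Rightarrow> real" where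
  "qbd x y =
     (if x = 0 then (if y = 1 then 1 else 0)
      else if y = x + 1 then (2 * real x - 1) / (4 * real x)
      else if y + 1 = x then 1 - (2 * real x - 1) / (4 * real x)
      else 0)"

text \<open>Spider configurations {a,b} with a<b are encoded as pairs (a,b).
Allowed configurations: L(x) = {(x,x+1),(x,x+2)}.\<close>
definition spider_states :: "(nat \<times> nat) set" where
  "spider_states = {(x, x + 1) | x. True} \<union> {(x, x + 2) | x. True}"

definition spider_rate :: "(nat \<Rightarrow> nat \<Rightarrow> real) \<Rightarrow> nat \<times> nat \<Rightarrow> nat \<times> nat \<Rightarrow> real" where
  "spider_rate q s t =
     (if s \<in> spider_states \<and> t \<in> spider_states then
        (if fst t = fst s \<and> snd t \<noteq> snd s then q (snd s) (snd t)
         else if snd t = snd s \<and> fst t \<noteq> fst s then q (fst s) (fst t)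
         else 0)
      else 0)"

end

theory Submission
  imports Defs
begin

(* Both chains in the theorem reduce to birth-death chains on the naturals: a chain bd a that
   moves from y to y+1 with probability a y and to y-1 with probability 1 - a y (a 0 = 1).
   The jump chain of qbd is bd qu with qu y = (2y-1)/(4y); the spider states can be enumerated
   as enc 0, enc 1, ... with (x,x+1) = enc (2x), (x,x+2) = enc (2x+1), and along this
   enumeration the spider's jump chain is again a birth-death chain bd asp.

   For a birth-death chain we prove:
   (1) if a y <= 1/2 for y >= 2, the probability of ever reaching x is 1 from every state, so
       every state is recurrent (the increments of this harmonic function grow geometrically);
   (2) given a reversible measure pi: if pi is summable, the tails of pi yield a nonnegative
       Lyapunov function bounding the expected hitting times, so every state is positive
       recurrent; if pi is bounded and not summable, finite expected hitting times would solve
       a Poisson equation whose probability flux diverges, so every state is null recurrent.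
   The qbd chain has the reversible measure mu y ~ 1/(4y), bounded and not summable; the spider
   chain has the reversible measure pis m = mu x1 * mu x2 * (total rate) = O(1/m^2), summable.
   Finally, positive recurrence is transported along the injective enumeration enc. *)

section \<open>Birth-death chains on the naturals\<close>

definition bd :: "(nat \<Rightarrow> real) \<Rightarrow> nat \<Rightarrow> nat \<Rightarrow> real" where
  "bd a y z = (if z = Suc y then a y else if Suc z = y then 1 - a y else 0)"

declare hit.simps(2)[simp del]

locale birth_death =
  fixes a :: "nat \<Rightarrow> real"
  assumes a0: "a 0 = 1"
    and apos: "\<And>y. y \<ge> 1 \<Longrightarrow> 0 < a y \<and> a y < 1"
begin

lemma a_gt0: "0 < a y"
  using a0 apos[of y] by (cases "y = 0") auto

lemma a_le1: "a y \<le> 1"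
  using a0 apos[of y] by (cases "y = 0") auto

lemma bd_infsum:
  "infsum (\<lambda>z. bd a y z * g z) UNIV = a y * g (Suc y) + (1 - a y) * g (y - 1)"
proof -
  have "infsum (\<lambda>z. bd a y z * g z) UNIV = infsum (\<lambda>z. bd a y z * g z) {Suc y, y - 1}"
    by (rule infsum_cong_neutral) (auto simp: bd_def)
  also have "\<dots> = bd a y (Suc y) * g (Suc y) + bd a y (y - 1) * g (y - 1)"
    by simp
  also have "\<dots> = a y * g (Suc y) + (1 - a y) * g (y - 1)"
    using a0 by (cases y) (auto simp: bd_def)
  finally show ?thesis .
qed

lemma hit_Suc:
  "hit (bd a) x (Suc n) y =
     (if y = x then 0 else a y * hit (bd a) x n (Suc y) + (1 - a y) * hit (bd a) x n (y - 1))"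
  by (simp add: hit.simps(2) bd_infsum)

lemma ret_eq: "ret (bd a) x n = a x * hit (bd a) x n (Suc x) + (1 - a x) * hit (bd a) x n (x - 1)"
  by (simp add: ret_def bd_infsum)

lemma hit_nonneg: "0 \<le> hit (bd a) x n y"
proof (induction n arbitrary: y)
  case 0
  then show ?case by simp
next
  case (Suc n)
  then show ?case using a_gt0[of y] a_le1[of y] by (simp add: hit_Suc)
qed

lemma hit_x: "hit (bd a) x n x = (if n = 0 then 1 else 0)"
  by (cases n) (simp_all add: hit_Suc)

text \<open>First-passage probabilities at distinct times are those of disjoint events.\<close>
lemma hit_partial: "(\<Sum>k<n. hit (bd a) x k y) \<le> 1"
proof (induction n arbitrary: y)
  case 0
  then show ?case by simp
next
  case (Suc n)
  show ?case
  proof (cases "y = x")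
    case True
    then show ?thesis by (simp add: sum.lessThan_Suc_shift hit_x)
  next
    case False
    have "(\<Sum>k<Suc n. hit (bd a) x k y) = (\<Sum>k<n. hit (bd a) x (Suc k) y)"
      using False by (subst sum.lessThan_Suc_shift) simp
    also have "\<dots> = a y * (\<Sum>k<n. hit (bd a) x k (Suc y)) + (1 - a y) * (\<Sum>k<n. hit (bd a) x k (y - 1))"
      using False by (simp add: hit_Suc sum.distrib sum_distrib_left)
    also have "\<dots> \<le> a y * 1 + (1 - a y) * 1"
      using Suc a_gt0[of y] a_le1[of y] by (intro add_mono mult_left_mono) auto
    finally show ?thesis by simp
  qed
qed

lemma hit_summable: "summable (\<lambda>k. hit (bd a) x k y)"
  by (rule summableI_nonneg_bounded[OF hit_nonneg hit_partial])

definition reach :: "nat \<Rightarrow> nat \<Rightarrow> real" where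
  "reach x y = (\<Sum>k. hit (bd a) x k y)"

lemma reach_le1: "reach x y \<le> 1"
  unfolding reach_def using hit_summable hit_partial hit_nonneg by (meson suminf_le_const)

lemma reach_nonneg: "0 \<le> reach x y"
  unfolding reach_def using hit_summable hit_nonneg by (simp add: suminf_nonneg)

lemma reach_x: "reach x x = 1"
proof -
  have "(\<lambda>k. hit (bd a) x k x) sums 1"
    using sums_single[of 0 "\<lambda>_. 1::real"] by (simp add: hit_x if_distrib)
  then show ?thesis unfolding reach_def by (simp add: sums_iff)
qed

lemma reach_harmonic:
  assumes "y \<noteq> x"
  shows "reach x y = a y * reach x (Suc y) + (1 - a y) * reach x (y - 1)"
proof -
  have "reach x y = hit (bd a) x 0 y + (\<Sum>k. hit (bd a) x (Suc k) y)"
    unfolding reach_def using suminf_split_head[OF hit_summable] by simp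
  also have "\<dots> = (\<Sum>k. a y * hit (bd a) x k (Suc y) + (1 - a y) * hit (bd a) x k (y - 1))"
    using assms by (simp add: hit_Suc)
  also have "\<dots> = a y * reach x (Suc y) + (1 - a y) * reach x (y - 1)"
    unfolding reach_def
    by (subst suminf_add[symmetric]) (auto intro: summable_mult hit_summable simp: suminf_mult hit_summable)
  finally show ?thesis .
qed

lemma reach_increments:
  assumes "y \<noteq> x" "y \<ge> 1"
  shows "a y * (reach x y - reach x (Suc y)) = (1 - a y) * (reach x (y - 1) - reach x y)"
  using reach_harmonic[OF assms(1)] by (simp add: algebra_simps)

text \<open>Below x the chain is pushed upwards past every state, so it reaches x surely.\<close>
lemma reach_below:
  assumes "y \<le> x"
  shows "reach x y = 1"
proof -
  have step: "reach x (Suc y) = reach x y" if "y < x" for y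
    using that
  proof (induction y)
    case 0
    then show ?case using reach_harmonic[of 0 x] a0 by simp
  next
    case (Suc y)
    have IH: "reach x (Suc y) = reach x y" using Suc by simp
    have "a (Suc y) * (reach x (Suc y) - reach x (Suc (Suc y))) = (1 - a (Suc y)) * (reach x y - reach x (Suc y))"
      using reach_increments[of "Suc y" x] Suc.prems by simp
    then have "a (Suc y) * (reach x (Suc y) - reach x (Suc (Suc y))) = 0"
      by (simp add: IH)
    then show ?case using a_gt0[of "Suc y"] by simp
  qed
  have "reach x y = reach x 0" if "y \<le> x" for y
    using that by (induction y) (auto simp: step)
  then show ?thesis using assms reach_x[of x] by (metis order_refl)
qed

lemma partial_time_step:
  assumes "y \<noteq> x"
  shows "(\<Sum>k<Suc n. real k * hit (bd a) x k y) =
    a y * ((\<Sum>k<n. real k * hit (bd a) x k (Suc y)) + (\<Sum>k<n. hit (bd a) x k (Suc y)))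
    + (1 - a y) * ((\<Sum>k<n. real k * hit (bd a) x k (y - 1)) + (\<Sum>k<n. hit (bd a) x k (y - 1)))"
proof -
  have "(\<Sum>k<Suc n. real k * hit (bd a) x k y) = (\<Sum>k<n. real (Suc k) * hit (bd a) x (Suc k) y)"
    by (subst sum.lessThan_Suc_shift) simp
  also have "\<dots> = (\<Sum>k<n. a y * (real k * hit (bd a) x k (Suc y)) + a y * hit (bd a) x k (Suc y)
      + ((1 - a y) * (real k * hit (bd a) x k (y - 1)) + (1 - a y) * hit (bd a) x k (y - 1)))"
    using assms by (intro sum.cong refl) (simp add: hit_Suc algebra_simps)
  also have "\<dots> = a y * (\<Sum>k<n. real k * hit (bd a) x k (Suc y)) + a y * (\<Sum>k<n. hit (bd a) x k (Suc y))
      + ((1 - a y) * (\<Sum>k<n. real k * hit (bd a) x k (y - 1)) + (1 - a y) * (\<Sum>k<n. hit (bd a) x k (y - 1)))"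
    by (simp add: sum.distrib sum_distrib_left)
  also have "\<dots> = a y * ((\<Sum>k<n. real k * hit (bd a) x k (Suc y)) + (\<Sum>k<n. hit (bd a) x k (Suc y)))
    + (1 - a y) * ((\<Sum>k<n. real k * hit (bd a) x k (y - 1)) + (\<Sum>k<n. hit (bd a) x k (y - 1)))"
    by (simp add: algebra_simps)
  finally show ?thesis .
qed

lemma return_time_summable:
  assumes "\<And>y. summable (\<lambda>k. real k * hit (bd a) x k y)"
  shows "summable (\<lambda>n. real (Suc n) * ret (bd a) x n)"
proof -
  have e: "real (Suc n) * ret (bd a) x n =
     a x * (real n * hit (bd a) x n (Suc x)) + a x * hit (bd a) x n (Suc x)
     + ((1 - a x) * (real n * hit (bd a) x n (x - 1)) + (1 - a x) * hit (bd a) x n (x - 1))" for n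
    unfolding ret_eq by (simp add: algebra_simps)
  show ?thesis unfolding e
    by (intro summable_add summable_mult assms hit_summable)
qed

text \<open>Conversely a finite mean return time to x gives finite mean hitting times of x from
  above: a first passage from y+1 is, after one extra step, a first passage from y.\<close>
lemma hitting_time_summable_above:
  assumes S: "summable (\<lambda>n. real (Suc n) * ret (bd a) x n)" and "x \<le> y"
  shows "summable (\<lambda>k. real k * hit (bd a) x k y)"
proof -
  have up_step: "summable (\<lambda>k. real k * hit (bd a) x k (Suc y))"
    if g: "summable (\<lambda>k. real (Suc k) * p k / a y)"
      and le: "\<And>k. a y * hit (bd a) x k (Suc y) \<le> p k" for y p
  proof (rule summable_comparison_test'[where N=0, OF g])
    fix n :: nat
    have "real n * (a y * hit (bd a) x n (Suc y)) \<le> real (Suc n) * p n"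
      using le[of n] hit_nonneg[of x n "Suc y"] a_gt0[of y] by (intro mult_mono) auto
    then show "norm (real n * hit (bd a) x n (Suc y)) \<le> real (Suc n) * p n / a y"
      using hit_nonneg[of x n "Suc y"] a_gt0[of y] by (simp add: field_simps)
  qed
  have step: "summable (\<lambda>k. real k * hit (bd a) x k (Suc y))"
    if "x \<le> y" "summable (\<lambda>k. real k * hit (bd a) x k y)" for y
  proof (cases "y = x")
    case True
    show ?thesis
    proof (rule up_step)
      show "summable (\<lambda>k. real (Suc k) * ret (bd a) x k / a y)"
        using S by (rule summable_divide)
      show "a y * hit (bd a) x k (Suc y) \<le> ret (bd a) x k" for k
        unfolding ret_eq True using hit_nonneg[of x k "x - 1"] a_le1[of x] by simp
    qed
  next
    case False
    show ?thesis
    proof (rule up_step)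
      show "summable (\<lambda>k. real (Suc k) * hit (bd a) x (Suc k) y / a y)"
        using that(2) summable_Suc_iff[of "\<lambda>k. real k * hit (bd a) x k y"]
        by (intro summable_divide) simp
      show "a y * hit (bd a) x k (Suc y) \<le> hit (bd a) x (Suc k) y" for k
        unfolding hit_Suc using False hit_nonneg[of x k "y - 1"] a_le1[of y] by simp
    qed
  qed
  have "(\<lambda>k. real k * hit (bd a) x k x) = (\<lambda>k. 0)"
    by (auto simp: hit_x)
  then have base: "summable (\<lambda>k. real k * hit (bd a) x k x)"
    by simp
  have "summable (\<lambda>k. real k * hit (bd a) x k (x + m))" for m
    by (induction m) (use base step in auto)
  then show ?thesis
    using assms(2) by (metis le_add_diff_inverse)
qed

end

locale recurrent_birth_death = birth_death +
  assumes a_half: "\<And>y. y \<ge> 2 \<Longrightarrow> a y \<le> 1/2"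
begin

text \<open>From x+1 the chain reaches x surely: otherwise the decrements of the reaching
  probability above x would never shrink (their ratio (1 - a y)/a y is at least 1), so
  it would eventually become negative.\<close>
lemma reach_from_above: "reach x (Suc x) = 1"
proof (rule ccontr)
  assume "reach x (Suc x) \<noteq> 1"
  define \<delta> where "\<delta> = 1 - reach x (Suc x)"
  have \<delta>_pos: "\<delta> > 0"
    using \<open>reach x (Suc x) \<noteq> 1\<close> reach_le1[of x "Suc x"] unfolding \<delta>_def by simp
  define d where "d y = reach x y - reach x (Suc y)" for y
  define r where "r y = (1 - a y) / a y" for y
  have d_rec: "d y = r y * d (y - 1)" if "x < y" for y
    using reach_increments[of y x] that a_gt0[of y] unfolding d_def r_def
    by (simp add: field_simps)
  define c where "c = min 1 (r 1)"
  have c_pos: "c > 0" using apos[of 1] unfolding c_def r_def by simp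
  have d_lower: "d (x + m) \<ge> c * \<delta>" for m
  proof (induction m)
    case 0
    have "d x = \<delta>" unfolding d_def \<delta>_def using reach_x by simp
    then show ?case using \<delta>_pos unfolding c_def by simp
  next
    case (Suc m)
    have eq: "d (x + Suc m) = r (x + Suc m) * d (x + m)"
      using d_rec[of "x + Suc m"] by simp
    show ?case
    proof (cases "x + Suc m \<ge> 2")
      case True
      have "r (x + Suc m) \<ge> 1"
        using a_half[OF True] a_gt0[of "x + Suc m"] unfolding r_def by (simp add: field_simps)
      moreover have "0 \<le> d (x + m)"
        using Suc.IH c_pos \<delta>_pos by (smt (verit) mult_pos_pos)
      ultimately have "d (x + m) \<le> r (x + Suc m) * d (x + m)"
        using mult_right_mono[of 1 "r (x + Suc m)" "d (x + m)"] by simp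
      then show ?thesis using eq Suc.IH by simp
    next
      case False
      then have "x = 0" "m = 0" by auto
      then have "d (x + Suc m) = r 1 * \<delta>"
        using eq reach_x unfolding d_def \<delta>_def by simp
      then show ?thesis unfolding c_def using \<delta>_pos by (simp add: mult_right_mono)
    qed
  qed
  have reach_upper: "reach x (x + m) \<le> 1 - real m * (c * \<delta>)" for m
  proof (induction m)
    case 0
    then show ?case using reach_x by simp
  next
    case (Suc m)
    have "reach x (x + Suc m) = reach x (x + m) - d (x + m)" unfolding d_def by simp
    then show ?case using Suc d_lower[of m] by (simp add: algebra_simps)
  qed
  obtain m where "real m > 1 / (c * \<delta>)" using reals_Archimedean2 by blast
  then have "real m * (c * \<delta>) > 1" using c_pos \<delta>_pos by (simp add: field_simps)
  then show False using reach_upper[of m] reach_nonneg[of x "x + m"] by simp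
qed

text \<open>A harmonic function equal to 1 at x and x+1 is 1 everywhere above x.\<close>
lemma reach_one: "reach x y = 1"
proof -
  have "reach x (x + m) = 1 \<and> reach x (x + Suc m) = 1" for m
  proof (induction m)
    case 0
    then show ?case using reach_x reach_from_above by simp
  next
    case (Suc m)
    have "a (x + Suc m) * (reach x (x + Suc m) - reach x (Suc (x + Suc m)))
        = (1 - a (x + Suc m)) * (reach x (x + m) - reach x (x + Suc m))"
      using reach_increments[of "x + Suc m" x] by simp
    then have "a (x + Suc m) * (1 - reach x (Suc (x + Suc m))) = 0"
      using Suc.IH by simp
    then show ?case using Suc.IH a_gt0[of "x + Suc m"] by simp
  qed
  then show ?thesis using reach_below by (metis le_add_diff_inverse nat_le_linear)
qed

lemma hit_sums: "(\<lambda>k. hit (bd a) x k y) sums 1"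
  using hit_summable reach_one unfolding reach_def by (metis summable_sums)

lemma recurrent: "recurrent_state (bd a) x"
proof -
  have "(\<lambda>n. a x * hit (bd a) x n (Suc x) + (1 - a x) * hit (bd a) x n (x - 1))
          sums (a x * 1 + (1 - a x) * 1)"
    by (intro sums_add sums_mult hit_sums)
  then show ?thesis unfolding recurrent_state_def ret_eq by simp
qed

text \<open>Foster's criterion: a nonnegative function whose mean value after one step drops by at
  least 1 off x bounds the mean hitting time of x, hence x is positive recurrent.\<close>
lemma positive_recurrent_of_lyapunov:
  assumes V_nonneg: "\<And>y. 0 \<le> V y"
    and drift: "\<And>y. y \<noteq> x \<Longrightarrow> 1 + a y * V (Suc y) + (1 - a y) * V (y - 1) \<le> V y"
  shows "positive_recurrent_state (bd a) x"
proof -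
  have bound: "(\<Sum>k<n. real k * hit (bd a) x k y) \<le> V y" for n y
  proof (induction n arbitrary: y)
    case 0
    then show ?case using V_nonneg by simp
  next
    case (Suc n)
    show ?case
    proof (cases "y = x")
      case True
      have "(\<Sum>k<Suc n. real k * hit (bd a) x k x) = 0"
        by (rule sum.neutral) (simp add: hit_x)
      then show ?thesis using V_nonneg True by simp
    next
      case False
      have "(\<Sum>k<Suc n. real k * hit (bd a) x k y) \<le>
         a y * (V (Suc y) + 1) + (1 - a y) * (V (y - 1) + 1)"
        unfolding partial_time_step[OF False]
        using Suc.IH hit_partial a_gt0[of y] a_le1[of y]
        by (intro add_mono mult_left_mono) auto
      then show ?thesis using drift[OF False] by (simp add: algebra_simps)
    qed
  qed
  have "summable (\<lambda>k. real k * hit (bd a) x k y)" for y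
    by (rule summableI_nonneg_bounded[OF _ bound]) (simp add: hit_nonneg)
  then show ?thesis
    unfolding positive_recurrent_state_def using recurrent return_time_summable by blast
qed

definition hitting_time :: "nat \<Rightarrow> nat \<Rightarrow> real" where
  "hitting_time x y = (\<Sum>k. real k * hit (bd a) x k y)"

lemma hitting_time_eq:
  assumes "x < y"
    and S: "\<And>z. x \<le> z \<Longrightarrow> summable (\<lambda>k. real k * hit (bd a) x k z)"
  shows "hitting_time x y = a y * (hitting_time x (Suc y) + 1) + (1 - a y) * (hitting_time x (y - 1) + 1)"
proof -
  have "hitting_time x y = (\<Sum>k. real (Suc k) * hit (bd a) x (Suc k) y)"
    unfolding hitting_time_def using suminf_split_head[OF S[of y]] assms(1) by simp
  also have "\<dots> = (\<Sum>k. a y * (real k * hit (bd a) x k (Suc y)) + a y * hit (bd a) x k (Suc y)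
      + ((1 - a y) * (real k * hit (bd a) x k (y - 1)) + (1 - a y) * hit (bd a) x k (y - 1)))"
    using assms(1) by (intro suminf_cong) (simp add: hit_Suc algebra_simps)
  also have "\<dots> = a y * hitting_time x (Suc y) + a y * 1 + ((1 - a y) * hitting_time x (y - 1) + (1 - a y) * 1)"
    unfolding hitting_time_def
    using assms(1) by (intro sums_unique[symmetric] sums_add sums_mult hit_sums summable_sums S) auto
  finally show ?thesis by (simp add: algebra_simps)
qed

end

locale reversible_birth_death = birth_death +
  fixes \<pi> :: "nat \<Rightarrow> real"
  assumes pi_pos: "\<And>y. 0 < \<pi> y"
    and pi_rev: "\<And>y. \<pi> y * a y = \<pi> (Suc y) * (1 - a (Suc y))"
begin

definition tail :: "nat \<Rightarrow> real" where "tail k = (\<Sum>j. \<pi> (k + j))"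
definition cumul :: "nat \<Rightarrow> real" where "cumul k = (\<Sum>j\<le>k. \<pi> j)"

text \<open>The Lyapunov function for x: the mean time to step down from k > x is
  tail k / ((1 - a k) * \<pi> k), the mean time to step up from k < x is cumul k / (a k * \<pi> k);
  summing these along the path from y to x gives the mean hitting time of x.\<close>
definition lyapunov :: "nat \<Rightarrow> nat \<Rightarrow> real" where
  "lyapunov x y =
     (if x \<le> y then (\<Sum>k\<in>{Suc x..y}. tail k / ((1 - a k) * \<pi> k))
      else (\<Sum>k\<in>{y..<x}. cumul k / (a k * \<pi> k)))"

lemma cumul_nonneg: "0 \<le> cumul k"
  unfolding cumul_def using pi_pos by (simp add: sum_nonneg less_imp_le)

lemma lyapunov_above:
  "x \<le> y \<Longrightarrow> lyapunov x (Suc y) = lyapunov x y + tail (Suc y) / ((1 - a (Suc y)) * \<pi> (Suc y))"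
  unfolding lyapunov_def by simp

lemma lyapunov_below:
  "y < x \<Longrightarrow> lyapunov x y = cumul y / (a y * \<pi> y) + lyapunov x (Suc y)"
  unfolding lyapunov_def by (auto simp: sum.atLeast_Suc_lessThan)

lemma lyapunov_drift_below:
  assumes "y < x"
  shows "1 + a y * lyapunov x (Suc y) + (1 - a y) * lyapunov x (y - 1) \<le> lyapunov x y"
proof (cases y)
  case 0
  then show ?thesis
    using lyapunov_below[OF assms] a0 pi_pos[of 0] by (simp add: cumul_def)
next
  case (Suc w)
  define f where "f k = cumul k / (a k * \<pi> k)" for k
  have up: "a (Suc w) * f (Suc w) = cumul (Suc w) / \<pi> (Suc w)"
    unfolding f_def using a_gt0[of "Suc w"] pi_pos[of "Suc w"] by (simp add: field_simps)
  have balance: "a w * \<pi> w = (1 - a (Suc w)) * \<pi> (Suc w)"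
    using pi_rev[of w] by (simp add: mult.commute)
  have down: "(1 - a (Suc w)) * f w = cumul w / \<pi> (Suc w)"
    unfolding f_def balance using pi_pos[of "Suc w"] apos[of "Suc w"] by (simp add: field_simps)
  have cumul_Suc: "cumul (Suc w) / \<pi> (Suc w) = 1 + cumul w / \<pi> (Suc w)"
    unfolding cumul_def using pi_pos[of "Suc w"] by (simp add: field_simps)
  have next_up: "lyapunov x (Suc w) = f (Suc w) + lyapunov x (Suc (Suc w))"
    using lyapunov_below[of "Suc w" x] assms Suc unfolding f_def by simp
  have next_down: "lyapunov x w = f w + lyapunov x (Suc w)"
    using lyapunov_below[of w x] assms Suc unfolding f_def by simp
  have "1 + a y * lyapunov x (Suc y) + (1 - a y) * lyapunov x (y - 1)
      = 1 + lyapunov x (Suc w) - a (Suc w) * f (Suc w) + (1 - a (Suc w)) * f w"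
    unfolding Suc using next_up next_down by (simp add: algebra_simps)
  also have "\<dots> = lyapunov x y"
    unfolding up down cumul_Suc Suc by simp
  finally show ?thesis by simp
qed

text \<open>For a solution K of the Poisson equation above x, detailed balance turns the equation
  into a conservation law: the probability flux \<pi> y * a y * (K (y+1) - K y) decreases by
  exactly \<pi> y at each y > x.\<close>
lemma poisson_flux:
  assumes poisson: "\<And>y. x < y \<Longrightarrow> K y = a y * (K (Suc y) + 1) + (1 - a y) * (K (y - 1) + 1)"
  shows "\<pi> (x + m) * a (x + m) * (K (Suc (x + m)) - K (x + m))
           = \<pi> x * a x * (K (Suc x) - K x) + cumul x - cumul (x + m)"
proof (induction m)
  case 0
  then show ?case by simp
next
  case (Suc m)
  define y where "y = Suc (x + m)"
  have step: "a y * (K (Suc y) - K y) = (1 - a y) * (K y - K (x + m)) - 1"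
    using poisson[of y] unfolding y_def by (simp add: algebra_simps)
  have "\<pi> y * a y * (K (Suc y) - K y) = \<pi> y * ((1 - a y) * (K y - K (x + m)) - 1)"
    using step by (simp add: mult.assoc)
  also have "\<dots> = \<pi> y * (1 - a y) * (K y - K (x + m)) - \<pi> y"
    by (simp add: algebra_simps)
  also have "\<pi> y * (1 - a y) = \<pi> (x + m) * a (x + m)"
    using pi_rev[of "x + m"] unfolding y_def by simp
  finally show ?case
    using Suc.IH unfolding y_def by (simp add: cumul_def)
qed

lemma cumul_unbounded:
  assumes "\<not> summable \<pi>"
  obtains n where "cumul n > c"
proof -
  have "\<not> (\<forall>n. (\<Sum>k<n. \<pi> k) \<le> c)"
    using assms pi_pos summableI_nonneg_bounded[of \<pi> c] by (auto intro: less_imp_le)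
  then obtain n where "(\<Sum>k<n. \<pi> k) > c" by (auto simp: not_le)
  moreover have "(\<Sum>k<n. \<pi> k) \<le> cumul n"
    unfolding cumul_def using pi_pos by (intro sum_mono2) (auto intro: less_imp_le)
  ultimately show ?thesis using that[of n] by linarith
qed

lemma cumul_mono: "m \<le> n \<Longrightarrow> cumul m \<le> cumul n"
  unfolding cumul_def using pi_pos by (intro sum_mono2) (auto intro: less_imp_le)

text \<open>If \<pi> is bounded but not summable, the Poisson equation has no solution that is
  nonnegative above x: the flux becomes eventually \<le> -1, so K decreases eventually by at
  least 1/B per step.\<close>
lemma no_nonneg_poisson_solution:
  assumes not_summable: "\<not> summable \<pi>" and pi_bounded: "\<And>y. \<pi> y \<le> B"
    and K_nonneg: "\<And>y. x \<le> y \<Longrightarrow> 0 \<le> K y"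
    and poisson: "\<And>y. x < y \<Longrightarrow> K y = a y * (K (Suc y) + 1) + (1 - a y) * (K (y - 1) + 1)"
  shows False
proof -
  have B_pos: "B > 0" using pi_pos[of 0] pi_bounded[of 0] by simp
  obtain n where n: "cumul n > \<pi> x * a x * (K (Suc x) - K x) + cumul x + 1"
    using cumul_unbounded[OF not_summable] by blast
  have decrement: "K (Suc (x + m)) - K (x + m) \<le> - 1 / B" if "n \<le> m" for m
  proof -
    have w_pos: "0 < \<pi> (x + m) * a (x + m)" using pi_pos a_gt0 by simp
    have w_le: "\<pi> (x + m) * a (x + m) \<le> B"
      using mult_left_mono[OF a_le1 less_imp_le[OF pi_pos]] pi_bounded[of "x + m"]
      by (smt (verit) mult.right_neutral)
    have "cumul n \<le> cumul (x + m)" using that by (intro cumul_mono) simp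
    then have "\<pi> (x + m) * a (x + m) * (K (Suc (x + m)) - K (x + m)) \<le> -1"
      using poisson_flux[where x=x and K=K and m=m, OF poisson] n by simp
    then have "K (Suc (x + m)) - K (x + m) \<le> -1 / (\<pi> (x + m) * a (x + m))"
      using w_pos by (subst pos_le_divide_eq) (simp_all add: mult.commute)
    also have "\<dots> \<le> -1 / B"
      using w_pos w_le by (simp add: frac_le)
    finally show ?thesis .
  qed
  have K_upper: "K (x + n + j) \<le> K (x + n) - real j / B" for j
  proof (induction j)
    case 0
    then show ?case by simp
  next
    case (Suc j)
    have "real (Suc j) / B = real j / B + 1 / B" by (simp add: add_divide_distrib)
    then show ?case using Suc.IH decrement[of "n + j"] by (simp add: add.assoc)
  qed
  obtain j where "real j > K (x + n) * B" using reals_Archimedean2 by blast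
  then have "real j / B > K (x + n)" using B_pos by (simp add: field_simps)
  then show False using K_upper[of j] K_nonneg[of "x + n + j"] by simp
qed

context
  assumes pi_summable: "summable \<pi>"
begin

lemma tail_split: "tail k = \<pi> k + tail (Suc k)"
proof -
  have "summable (\<lambda>j. \<pi> (k + j))"
    using pi_summable summable_ignore_initial_segment[of \<pi> k] by (simp add: add.commute)
  then show ?thesis unfolding tail_def using suminf_split_head by fastforce
qed

lemma tail_nonneg: "0 \<le> tail k"
proof -
  have "summable (\<lambda>j. \<pi> (k + j))"
    using pi_summable summable_ignore_initial_segment[of \<pi> k] by (simp add: add.commute)
  then show ?thesis unfolding tail_def using pi_pos by (simp add: suminf_nonneg less_imp_le)
qed

lemma lyapunov_nonneg: "0 \<le> lyapunov x y"
  unfolding lyapunov_def using tail_nonneg cumul_nonneg apos a_gt0 pi_pos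
  by (auto intro!: sum_nonneg divide_nonneg_pos mult_pos_pos)

lemma lyapunov_drift_above:
  assumes "x < y"
  shows "1 + a y * lyapunov x (Suc y) + (1 - a y) * lyapunov x (y - 1) \<le> lyapunov x y"
proof -
  obtain z where z: "y = Suc z" "x \<le> z" using assms by (cases y) auto
  define e where "e k = tail k / ((1 - a k) * \<pi> k)" for k
  have balance: "(1 - a (Suc (Suc z))) * \<pi> (Suc (Suc z)) = \<pi> (Suc z) * a (Suc z)"
    using pi_rev[of "Suc z"] by (simp add: mult.commute)
  have up: "a (Suc z) * e (Suc (Suc z)) = tail (Suc (Suc z)) / \<pi> (Suc z)"
    unfolding e_def balance using a_gt0[of "Suc z"] pi_pos[of "Suc z"] by (simp add: field_simps)
  have down: "(1 - a (Suc z)) * e (Suc z) = tail (Suc z) / \<pi> (Suc z)"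
    unfolding e_def using apos[of "Suc z"] pi_pos[of "Suc z"] by (simp add: field_simps)
  have tail_Suc: "tail (Suc z) / \<pi> (Suc z) = 1 + tail (Suc (Suc z)) / \<pi> (Suc z)"
    using tail_split[of "Suc z"] pi_pos[of "Suc z"] by (simp add: field_simps)
  have next_up: "lyapunov x (Suc (Suc z)) = lyapunov x (Suc z) + e (Suc (Suc z))"
    using lyapunov_above[of x "Suc z"] z unfolding e_def by simp
  have next_down: "lyapunov x z = lyapunov x (Suc z) - e (Suc z)"
    using lyapunov_above[of x z] z unfolding e_def by simp
  have "1 + a y * lyapunov x (Suc y) + (1 - a y) * lyapunov x (y - 1)
      = 1 + lyapunov x (Suc z) + a (Suc z) * e (Suc (Suc z)) - (1 - a (Suc z)) * e (Suc z)"
    unfolding z diff_Suc_1 next_up next_down by (simp add: algebra_simps)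
  also have "\<dots> = lyapunov x y"
    unfolding up down tail_Suc z by simp
  finally show ?thesis by simp
qed

end

end

locale reversible_recurrent_birth_death =
  recurrent_birth_death a + reversible_birth_death a \<pi> for a \<pi>
begin

theorem positive_recurrent_criterion:
  assumes "summable \<pi>"
  shows "positive_recurrent_state (bd a) x"
proof (rule positive_recurrent_of_lyapunov)
  show "0 \<le> lyapunov x y" for y
    using lyapunov_nonneg[OF assms] .
  show "1 + a y * lyapunov x (Suc y) + (1 - a y) * lyapunov x (y - 1) \<le> lyapunov x y"
    if "y \<noteq> x" for y
    using that lyapunov_drift_below[of y x] lyapunov_drift_above[OF assms, of x y]
    by (cases "y < x") auto
qed

theorem null_recurrent_criterion:
  assumes "\<not> summable \<pi>" and "\<And>y. \<pi> y \<le> B"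
  shows "null_recurrent_state (bd a) x"
proof -
  have "\<not> summable (\<lambda>n. real (Suc n) * ret (bd a) x n)"
  proof
    assume "summable (\<lambda>n. real (Suc n) * ret (bd a) x n)"
    then have S: "summable (\<lambda>k. real k * hit (bd a) x k y)" if "x \<le> y" for y
      using that by (rule hitting_time_summable_above)
    show False
    proof (rule no_nonneg_poisson_solution[OF assms])
      show "0 \<le> hitting_time x y" if "x \<le> y" for y
        unfolding hitting_time_def using S[OF that] hit_nonneg by (simp add: suminf_nonneg)
      show "hitting_time x y = a y * (hitting_time x (Suc y) + 1) + (1 - a y) * (hitting_time x (y - 1) + 1)"
        if "x < y" for y
        using that S by (rule hitting_time_eq)
    qed
  qed
  then show ?thesis unfolding null_recurrent_state_def using recurrent by blast
qed

end

section \<open>The birth-death process qbd is null recurrent\<close>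

definition qu :: "nat \<Rightarrow> real" where
  "qu y = (if y = 0 then 1 else (2 * real y - 1) / (4 * real y))"
definition qd :: "nat \<Rightarrow> real" where
  "qd y = (if y = 0 then 0 else (2 * real y + 1) / (4 * real y))"

text \<open>The reversible measure of the qbd jump chain; mu y is of order 1/(4y).\<close>
definition mu :: "nat \<Rightarrow> real" where
  "mu y = (if y = 0 then 1/4 else real y / (4 * real y ^ 2 - 1))"

lemma qbd_alt: "qbd x y = (if y = Suc x then qu x else if Suc y = x then qd x else 0)"
  unfolding qbd_def qu_def qd_def by (auto simp: field_simps)

lemma qu_pos: "qu y > 0" unfolding qu_def by auto
lemma qu_le1: "qu y \<le> 1" unfolding qu_def by auto
lemma qu_half: "y \<ge> 1 \<Longrightarrow> qu y \<le> 1/2" unfolding qu_def by auto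
lemma qd_pos: "y \<ge> 1 \<Longrightarrow> qd y > 0" unfolding qd_def by auto
lemma qd_half: "y \<ge> 1 \<Longrightarrow> qd y \<ge> 1/2" unfolding qd_def by (auto simp: field_simps)
lemma qd_nonneg: "qd y \<ge> 0" unfolding qd_def by simp
lemma qd_le1: "qd y \<le> 1" unfolding qd_def by (auto simp: field_simps)
lemma qd0: "qd 0 = 0" unfolding qd_def by simp
lemma qu_qd: "y \<ge> 1 \<Longrightarrow> 1 - qu y = qd y" unfolding qu_def qd_def by (auto simp: field_simps)
lemma qu_lt1: "y \<ge> 1 \<Longrightarrow> qu y < 1" unfolding qu_def by (auto simp: field_simps)

lemma mu_denominator_pos: "y \<noteq> 0 \<Longrightarrow> 4 * real y ^ 2 - 1 > 0"
proof -
  assume "y \<noteq> 0"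
  then have "real y ^ 2 \<ge> 1" using one_le_power[of "real y" 2] by simp
  then show ?thesis by simp
qed

lemma mu_pos: "mu y > 0"
  unfolding mu_def using mu_denominator_pos[of y] by auto

lemma mu_le: "mu y \<le> 1 / (real y + 1)"
proof (cases "y = 0")
  case False
  then have y1: "real y \<ge> 1" by simp
  have "real y \<le> real y * real y"
    using mult_right_mono[of 1 "real y" "real y"] y1 by simp
  moreover have "real y * (real y + 1) = real y * real y + real y"
    by (simp add: distrib_left)
  ultimately have "real y * (real y + 1) \<le> 4 * (real y * real y) - 1"
    using y1 by linarith
  then have "real y * (real y + 1) \<le> 4 * real y ^ 2 - 1"
    by (simp add: power2_eq_square)
  then show ?thesis
    unfolding mu_def using False mu_denominator_pos[of y] by (simp add: field_simps)
qed (simp add: mu_def)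

lemma mu_le1: "mu y \<le> 1"
  using mu_le[of y] by (smt (verit) divide_le_eq_1 of_nat_0_le_iff)

lemma mu_ge: "mu y \<ge> inverse (real y) / 4"
proof (cases "y = 0")
  case False
  then show ?thesis
    unfolding mu_def using mu_denominator_pos[of y] by (simp add: field_simps power2_eq_square)
qed (simp add: mu_def)

lemma mu_not_summable: "\<not> summable mu"
proof
  assume "summable mu"
  then have "summable (\<lambda>y. inverse (real y) / 4)"
    by (rule summable_comparison_test'[where N=0]) (use mu_ge in simp)
  then have "summable (\<lambda>y. 4 * (inverse (real y) / 4))" by (rule summable_mult)
  then show False using not_summable_harmonic[where 'a=real] by simp
qed

lemma mu_rev: "mu y * qu y = mu (Suc y) * qd (Suc y)"
proof (cases "y = 0")
  case True
  then show ?thesis by (simp add: mu_def qu_def qd_def)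
next
  case False
  define t where "t = real y"
  have t1: "t \<ge> 1" using False unfolding t_def by simp
  have "t * t \<ge> 1" using mult_mono[of 1 t 1 t] t1 by simp
  then have ne: "t * (t * 4) \<noteq> 1" by (simp add: mult_ac)
  have "mu y * qu y = t / ((2 * t - 1) * (2 * t + 1)) * ((2 * t - 1) / (4 * t))"
    unfolding mu_def qu_def t_def using False by (simp add: algebra_simps power2_eq_square)
  also have "\<dots> = 1 / (4 * (2 * t + 1))"
    using t1 ne by (simp add: field_simps)
  also have "\<dots> = (t + 1) / ((2 * t + 1) * (2 * t + 3)) * ((2 * t + 3) / (4 * (t + 1)))"
    using t1 by (simp add: divide_simps) (simp add: algebra_simps)
  also have "\<dots> = mu (Suc y) * qd (Suc y)"
    unfolding mu_def qd_def t_def by (simp add: algebra_simps power2_eq_square)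
  finally show ?thesis .
qed

lemma jump_qbd: "jump_chain qbd = bd qu"
proof (intro ext)
  fix x y :: nat
  have "infsum (qbd x) {z. z \<noteq> x} = infsum (qbd x) {Suc x, x - 1}"
    by (rule infsum_cong_neutral) (auto simp: qbd_alt)
  also have "\<dots> = 1"
    using qu_qd[of x] by (cases x) (auto simp: qbd_alt qu_def)
  finally have total: "infsum (qbd x) {z. z \<noteq> x} = 1" .
  show "jump_chain qbd x y = bd qu x y"
    unfolding jump_chain_def total bd_def qbd_alt using qu_qd[of x] by auto
qed

interpretation Q: reversible_recurrent_birth_death qu mu
proof unfold_locales
  show "qu 0 = 1" by (simp add: qu_def)
  show "0 < qu y \<and> qu y < 1" if "y \<ge> 1" for y using that qu_pos qu_lt1 by simp
  show "qu y \<le> 1/2" if "y \<ge> 2" for y using that qu_half by simp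
  show "0 < mu y" for y by (rule mu_pos)
  show "mu y * qu y = mu (Suc y) * (1 - qu (Suc y))" for y
    using mu_rev[of y] qu_qd[of "Suc y"] by simp
qed

theorem qbd_null_recurrent: "ctmc_null_recurrent qbd UNIV"
  unfolding ctmc_null_recurrent_def jump_qbd
  using Q.null_recurrent_criterion[OF mu_not_summable mu_le1] by blast

section \<open>Transporting recurrence along an embedding\<close>

text \<open>If f embeds the state space of Q into that of P, P never leaves the image of f, and
  P agrees with Q along f, then first-passage probabilities, hence recurrence properties,
  agree along f.\<close>
locale chain_embedding =
  fixes P :: "'a \<Rightarrow> 'a \<Rightarrow> real" and Q :: "'b \<Rightarrow> 'b \<Rightarrow> real" and f :: "'b \<Rightarrow> 'a"
  assumes inj: "inj f"
    and stays_in_image: "\<And>m z. z \<notin> range f \<Longrightarrow> P (f m) z = 0"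
    and agrees: "\<And>m k. P (f m) (f k) = Q m k"
begin

lemma infsum_transfer:
  "infsum (\<lambda>z. P (f y) z * g z) UNIV = infsum (\<lambda>k. Q y k * g (f k)) UNIV"
proof -
  have "infsum (\<lambda>z. P (f y) z * g z) UNIV = infsum (\<lambda>z. P (f y) z * g z) (range f)"
    by (rule infsum_cong_neutral) (auto simp: stays_in_image)
  also have "\<dots> = infsum ((\<lambda>z. P (f y) z * g z) \<circ> f) UNIV"
    by (rule infsum_reindex) (use inj in simp)
  also have "\<dots> = infsum (\<lambda>k. Q y k * g (f k)) UNIV"
    by (simp add: o_def agrees)
  finally show ?thesis .
qed

lemma hit_transfer: "hit P (f x) n (f y) = hit Q x n y"
proof (induction n arbitrary: y)
  case 0
  then show ?case using inj by (simp add: inj_eq)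
next
  case (Suc n)
  have "infsum (\<lambda>z. P (f y) z * hit P (f x) n z) UNIV = infsum (\<lambda>k. Q y k * hit Q x n k) UNIV"
    unfolding infsum_transfer Suc.IH ..
  then show ?case using inj by (simp add: inj_eq hit.simps(2))
qed

lemma ret_transfer: "ret P (f x) = ret Q x"
  by (rule ext) (simp add: ret_def infsum_transfer hit_transfer)

lemma positive_recurrent_transfer:
  "positive_recurrent_state Q x \<Longrightarrow> positive_recurrent_state P (f x)"
  unfolding positive_recurrent_state_def recurrent_state_def ret_transfer .

end

section \<open>The spider walk is positive recurrent\<close>

definition enc :: "nat \<Rightarrow> nat \<times> nat" where
  "enc n = (n div 2, n div 2 + 1 + n mod 2)"

lemma enc_inj: "inj enc"
proof (rule injI)
  fix m n
  assume "enc m = enc n"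
  then have "m div 2 = n div 2" "m mod 2 = n mod 2" unfolding enc_def by auto
  then show "m = n" by (metis div_mult_mod_eq)
qed

lemma enc_even: "enc (2 * x) = (x, Suc x)" unfolding enc_def by simp
lemma enc_odd: "enc (Suc (2 * x)) = (x, Suc (Suc x))" unfolding enc_def by simp
lemma enc_pred: "enc (2 * x - 1) = (x - 1, Suc x)"
  by (cases x) (auto simp: enc_def)
lemma enc_even2: "enc (Suc (Suc (2 * x))) = (Suc x, Suc (Suc x))"
  using enc_even[of "Suc x"] by simp

lemma mem_spider_states: "(p, q) \<in> spider_states \<longleftrightarrow> q = Suc p \<or> q = Suc (Suc p)"
  unfolding spider_states_def by auto

lemma spider_states_enc: "s \<in> spider_states \<Longrightarrow> s \<in> range enc"
proof -
  assume "s \<in> spider_states"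
  moreover obtain p q where s: "s = (p, q)" by fastforce
  ultimately have "q = Suc p \<or> q = Suc (Suc p)" by (simp add: mem_spider_states)
  then have "s = enc (2 * p) \<or> s = enc (Suc (2 * p))"
    using s enc_even enc_odd by auto
  then show ?thesis by blast
qed

lemma spider_rate_adjacent:
  "spider_rate qbd (x, Suc x) t =
     (if t = (x, Suc (Suc x)) then qu (Suc x) else if t = (x - 1, Suc x) then qd x else 0)"
proof -
  obtain p q where t: "t = (p, q)" by fastforce
  show ?thesis
  proof (cases "(p, q) \<in> spider_states")
    case False
    then show ?thesis unfolding t spider_rate_def mem_spider_states using qd0 by auto
  next
    case True
    then have pq: "q = Suc p \<or> q = Suc (Suc p)" by (simp add: mem_spider_states)
    show ?thesis
    proof (cases "p = x")
      case True
      then show ?thesis using pq qd0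
        unfolding t spider_rate_def mem_spider_states by (cases x) (auto simp: qbd_alt)
    next
      case False
      then show ?thesis using pq qd0
        unfolding t spider_rate_def mem_spider_states by (auto simp: qbd_alt)
    qed
  qed
qed

lemma spider_rate_gap:
  "spider_rate qbd (x, Suc (Suc x)) t =
     (if t = (Suc x, Suc (Suc x)) then qu x else if t = (x, Suc x) then qd (Suc (Suc x)) else 0)"
proof -
  obtain p q where t: "t = (p, q)" by fastforce
  show ?thesis
  proof (cases "(p, q) \<in> spider_states")
    case False
    then show ?thesis unfolding t spider_rate_def mem_spider_states by auto
  next
    case True
    then have pq: "q = Suc p \<or> q = Suc (Suc p)" by (simp add: mem_spider_states)
    then show ?thesis
      unfolding t spider_rate_def mem_spider_states by (cases "p = x") (auto simp: qbd_alt)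
  qed
qed

definition up :: "nat \<Rightarrow> real" where
  "up m = (if even m then qu (m div 2 + 1) else qu (m div 2))"
definition dn :: "nat \<Rightarrow> real" where
  "dn m = (if even m then qd (m div 2) else qd (m div 2 + 2))"

lemma spider_rate_enc:
  "spider_rate qbd (enc m) t = (if t = enc (Suc m) then up m else if t = enc (m - 1) then dn m else 0)"
proof (cases "even m")
  case True
  define x where "x = m div 2"
  have m: "m = 2 * x" using True unfolding x_def by simp
  show ?thesis unfolding m enc_even up_def dn_def
    using enc_odd[of x] enc_pred[of x] spider_rate_adjacent[of x t] by simp
next
  case False
  define x where "x = m div 2"
  have m: "m = Suc (2 * x)" using False unfolding x_def by presburger
  show ?thesis unfolding m enc_odd up_def dn_def
    using enc_even2[of x] enc_even[of x] spider_rate_gap[of x t] by simp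
qed

lemma up_pos: "up m > 0" unfolding up_def using qu_pos by simp
lemma dn_nonneg: "dn m \<ge> 0" unfolding dn_def using qd_nonneg by simp
lemma dn0: "dn 0 = 0" unfolding dn_def using qd0 by simp
lemma dn_pos: "m \<ge> 1 \<Longrightarrow> dn m > 0" unfolding dn_def by (auto intro!: qd_pos)

lemma up_le_dn:
  assumes "m \<ge> 2"
  shows "up m \<le> dn m"
proof -
  have "m div 2 \<ge> 1" using assms by simp
  then show ?thesis
    unfolding up_def dn_def
    using qu_half[of "m div 2"] qu_half[of "m div 2 + 1"] qd_half[of "m div 2"] qd_half[of "m div 2 + 2"]
    by auto
qed

definition asp :: "nat \<Rightarrow> real" where
  "asp m = up m / (up m + dn m)"

lemma spider_total_rate: "infsum (spider_rate qbd (enc m)) {z. z \<noteq> enc m} = up m + dn m"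
proof -
  have ne1: "enc (Suc m) \<noteq> enc m" and ne2: "enc (Suc m) \<noteq> enc (m - 1)"
    using enc_inj by (simp_all add: inj_eq)
  have "infsum (spider_rate qbd (enc m)) {z. z \<noteq> enc m} =
        infsum (spider_rate qbd (enc m)) {enc (Suc m), enc (m - 1)}"
  proof (rule infsum_cong_neutral)
    fix z
    assume "z \<in> {enc (Suc m), enc (m - 1)} - {z. z \<noteq> enc m}"
    then have "z = enc (m - 1)" "m = 0" using ne1 enc_inj by (auto simp: inj_eq)
    then show "spider_rate qbd (enc m) z = 0" using spider_rate_enc[of m z] ne2 dn0 by simp
  next
    fix z
    assume "z \<in> {z. z \<noteq> enc m} - {enc (Suc m), enc (m - 1)}"
    then show "spider_rate qbd (enc m) z = 0" using spider_rate_enc[of m z] by simp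
  qed simp
  also have "\<dots> = up m + dn m" using ne2 spider_rate_enc[of m] by simp
  finally show ?thesis .
qed

interpretation spider_embedding: chain_embedding "jump_chain (spider_rate qbd)" "bd asp" enc
proof
  show "inj enc" by (rule enc_inj)
  show "jump_chain (spider_rate qbd) (enc m) z = 0" if "z \<notin> range enc" for m z
    using that unfolding jump_chain_def spider_rate_enc by auto
  show "jump_chain (spider_rate qbd) (enc m) (enc k) = bd asp m k" for m k
  proof -
    have "up m + dn m > 0" using up_pos[of m] dn_nonneg[of m] by simp
    moreover have "enc a = enc b \<longleftrightarrow> a = b" for a b using enc_inj by (simp add: inj_eq)
    ultimately show ?thesis
      unfolding jump_chain_def spider_total_rate spider_rate_enc bd_def asp_def
      using dn0 by (cases m) (auto simp: field_simps)
  qed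
qed

text \<open>Reversible measure of the spider's jump chain: the product measure mu x1 * mu x2 of the
  two legs, reweighted by the total jump rate.\<close>
definition pis :: "nat \<Rightarrow> real" where
  "pis m = mu (fst (enc m)) * mu (snd (enc m)) * (up m + dn m)"

lemma pis_pos: "pis m > 0"
  unfolding pis_def using mu_pos up_pos[of m] dn_nonneg[of m] by (simp add: add_pos_nonneg)

text \<open>Detailed balance for the spider follows from that of mu, since one leg moves at a time.\<close>
lemma pis_rev: "pis m * asp m = pis (Suc m) * (1 - asp (Suc m))"
proof -
  have "up m + dn m > 0" using up_pos[of m] dn_nonneg[of m] by simp
  then have L: "pis m * asp m = mu (fst (enc m)) * mu (snd (enc m)) * up m"
    unfolding pis_def asp_def by (simp add: field_simps)
  have "up (Suc m) + dn (Suc m) > 0" using up_pos[of "Suc m"] dn_nonneg[of "Suc m"] by simp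
  then have R: "pis (Suc m) * (1 - asp (Suc m))
      = mu (fst (enc (Suc m))) * mu (snd (enc (Suc m))) * dn (Suc m)"
    unfolding pis_def asp_def by (simp add: field_simps)
  show ?thesis
  proof (cases "even m")
    case True
    define x where "x = m div 2"
  have m: "m = 2 * x" using True unfolding x_def by simp
    show ?thesis
      unfolding L R unfolding m enc_even enc_odd up_def dn_def using mu_rev[of "Suc x"] by simp
  next
    case False
    define x where "x = m div 2"
  have m: "m = Suc (2 * x)" using False unfolding x_def by presburger
    show ?thesis
      unfolding L R unfolding m enc_even2 enc_odd up_def dn_def using mu_rev[of x] by (simp add: mult_ac)
  qed
qed

text \<open>Both legs of enc m are at least m/2, so pis m = O(1/m^2).\<close>
lemma pis_bound: "pis m \<le> 8 * inverse (real (Suc m) ^ 2)"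
proof -
  define x where "x = m div 2"
  have legs: "fst (enc m) = x" "snd (enc m) \<ge> Suc x" unfolding enc_def x_def by auto
  have mu1: "mu (fst (enc m)) \<le> 1 / (real x + 1)" using mu_le legs by simp
  have "mu (snd (enc m)) \<le> 1 / (real (snd (enc m)) + 1)" by (rule mu_le)
  also have "\<dots> \<le> 1 / (real x + 1)" using legs by (simp add: frac_le)
  finally have mu2: "mu (snd (enc m)) \<le> 1 / (real x + 1)" .
  have rates: "up m + dn m \<le> 2"
    unfolding up_def dn_def using qu_le1 qd_le1 by (smt (verit))
  have "pis m \<le> 1 / (real x + 1) * (1 / (real x + 1)) * 2"
    unfolding pis_def using mu1 mu2 rates mu_pos up_pos[of m] dn_nonneg[of m]
    by (intro mult_mono) (auto intro: mult_nonneg_nonneg less_imp_le)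
  also have "\<dots> = 8 / (2 * (real x + 1)) ^ 2"
  proof -
    have scale: "1 / A * (1 / A) * 2 = 8 / (2 * A) ^ 2" if "A > 0" for A :: real
      using that by (simp add: power2_eq_square field_simps)
    show ?thesis by (rule scale) simp
  qed
  also have "\<dots> \<le> 8 / real (Suc m) ^ 2"
    unfolding x_def by (intro divide_left_mono power_mono) auto
  finally show ?thesis by (simp add: divide_inverse)
qed

lemma pis_summable: "summable pis"
proof (rule summable_comparison_test'[where N=0])
  have "summable (\<lambda>n. inverse (real n ^ 2))" by (rule inverse_power_summable) simp
  then have "summable (\<lambda>n. inverse (real (Suc n) ^ 2))"
    using summable_Suc_iff[of "\<lambda>n. inverse (real n ^ 2)"] by simp
  then show "summable (\<lambda>n. 8 * inverse (real (Suc n) ^ 2))" by (rule summable_mult)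
  show "norm (pis n) \<le> 8 * inverse (real (Suc n) ^ 2)" for n
    using pis_pos[of n] pis_bound[of n] by simp
qed

interpretation S: reversible_recurrent_birth_death asp pis
proof unfold_locales
  show "asp 0 = 1" unfolding asp_def dn0 using up_pos[of 0] by simp
  show "0 < asp y \<and> asp y < 1" if "y \<ge> 1" for y
    unfolding asp_def using that up_pos[of y] dn_pos[of y] by (simp add: field_simps)
  show "asp y \<le> 1 / 2" if "y \<ge> 2" for y
    unfolding asp_def using that up_pos[of y] dn_pos[of y] up_le_dn[of y] by (simp add: field_simps)
  show "0 < pis y" for y by (rule pis_pos)
  show "pis y * asp y = pis (Suc y) * (1 - asp (Suc y))" for y by (rule pis_rev)
qed

theorem spider_positive_recurrent: "ctmc_positive_recurrent (spider_rate qbd) spider_states"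
  unfolding ctmc_positive_recurrent_def
proof
  fix s
  assume "s \<in> spider_states"
  then obtain m where s: "s = enc m" using spider_states_enc by blast
  show "positive_recurrent_state (jump_chain (spider_rate qbd)) s"
    unfolding s using S.positive_recurrent_criterion[OF pis_summable]
    by (rule spider_embedding.positive_recurrent_transfer)
qed

theorem mainTheorem8:
  shows "ctmc_null_recurrent qbd UNIV \<and> ctmc_positive_recurrent (spider_rate qbd) spider_states"
  using qbd_null_recurrent spider_positive_recurrent by simp

end
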